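(* Let $f:\mathbb{R}\to\mathbb{R}\cup\{\pm\infty\}$ be a proper concave function such that $f(\delta)\le 0$ and $\partial f(\delta)\cap\mathbb{R}_{<0}\neq\emptyset$ for some $\delta\in\operatorname{dom}(f)$, and such that $f$ has a root or attains its maximum. Let $\delta^*:=\max\big(\{\delta: f(\delta)=0\}\cup\operatorname{argmax} f\big)$. Run the look-ahead Newton–Dinkelbach method (described in the context) on $f$ from a valid initial pair $(\delta^{(1)},g^{(1)})$. Then for every iteration $i>2$ (i.e. whenever $\delta^{(i)}$ is defined with $i\ge 3$), \[ D_f(\delta^*,\delta^{(i)}) < \tfrac12\, D_f(\delta^*,\delta^{(i-2)}). \]
   Context: For a proper concave $f$, $\operatorname{dom}(f):=\{x:-\infty<f(x)<\infty\}$ and $\partial f(x_0):=\{g: f(x)\le f(x_0)+g(x-x_0)\ \forall x\in\mathbb{R}\}$ (supergradients). Bregman divergence: for $\delta,\delta'\in\operatorname{dom}(f)$ with $\partial f(\delta)\ne\emptyset$, $D_f(\delta',\delta):=f(\delta)+\sup_{g\in\partial f(\delta)} g(\delta'-\delta)-f(\delta')$ if $\delta\ne\delta'$, and $D_f(\delta,\delta):=0$. Look-ahead Newton–Dinkelbach method (Algorithm 1): it has an oracle that, given $\delta$, returns $f(\delta)$ and, if $f(\delta)>-\infty$, some (arbitrary) $g\in\partial f(\delta)$. Input: $\delta^{(1)}\in\operatorname{dom}(f)$ and $g^{(1)}\in\partial f(\delta^{(1)})$ with $f(\delta^{(1)})\le 0$ and $g^{(1)}<0$. For $i=1,2,\dots$: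 if $f(\delta^{(i)})=0$, return $\delta^{(i)}$. Otherwise set $\delta:=\delta^{(i)}-f(\delta^{(i)})/g^{(i)}$ and query $g\in\partial f(\delta)$; if $f(\delta)=-\infty$, or $f(\delta)<0$ and $g\ge 0$, return NO ROOT. Then set $\delta':=2\delta-\delta^{(i)}$ and query $g'\in\partial f(\delta')$; if $-\infty<f(\delta')<0$ and $g'<0$, replace $(\delta,g)$ by $(\delta',g')$. Set $\delta^{(i+1)}:=\delta$, $g^{(i+1)}:=g$. "Iteration $i$" is the iteration starting with the current pair $(\delta^{(i)},g^{(i)})$. *)

theory Defs
  imports "HOL-Analysis.Analysis" "HOL-Library.Extended_Real"
begin

definition proper_concave :: "(real \<Rightarrow> ereal) \<Rightarrow> bool" where
  "proper_concave f \<longleftrightarrow>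
     convex {(x, t::real). ereal t \<le> f x} \<and> (\<forall>x. f x \<noteq> \<infinity>) \<and> (\<exists>x. f x \<noteq> -\<infinity>)"

definition fdom :: "(real \<Rightarrow> ereal) \<Rightarrow> real set" where
  "fdom f = {x. -\<infinity> < f x \<and> f x < \<infinity>}"

definition sgrad :: "(real \<Rightarrow> ereal) \<Rightarrow> real \<Rightarrow> real set" where
  "sgrad f x0 = {g. \<forall>x. f x \<le> f x0 + ereal (g * (x - x0))}"

definition bregman :: "(real \<Rightarrow> ereal) \<Rightarrow> real \<Rightarrow> real \<Rightarrow> ereal" where
  "bregman f d' d =
     (if d' = d then 0
      else f d + (SUP g\<in>sgrad f d. ereal (g * (d' - d))) - f d')"

definition argmax_set :: "(real \<Rightarrow> ereal) \<Rightarrow> real set" where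
  "argmax_set f = {x. \<forall>y. f y \<le> f x}"

definition delta_star :: "(real \<Rightarrow> ereal) \<Rightarrow> real" where
  "delta_star f = (GREATEST x. x \<in> {d. f d = 0} \<union> argmax_set f)"

text \<open>One (non-terminating) iteration of the look-ahead Newton-Dinkelbach method,
  going from (d, g) = (delta^(i), g^(i)) to (d1, g1) = (delta^(i+1), g^(i+1)),
  where the oracle may return any supergradient.\<close>
definition la_step :: "(real \<Rightarrow> ereal) \<Rightarrow> real \<Rightarrow> real \<Rightarrow> real \<Rightarrow> real \<Rightarrow> bool" where
  "la_step f d g d1 g1 \<longleftrightarrow> f d \<noteq> 0 \<and>
     (let dl = d - real_of_ereal (f d) / g; dl' = 2 * dl - d in
       (\<exists>ga \<in> sgrad f dl. f dl \<noteq> -\<infinity> \<and> \<not> (f dl < 0 \<and> ga \<ge> 0) \<and>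
          ( (-\<infinity> < f dl' \<and> f dl' < 0 \<and> g1 \<in> sgrad f dl' \<and> g1 < 0 \<and> d1 = dl')
          \<or> ( d1 = dl \<and> g1 = ga \<and>
              (\<not> (-\<infinity> < f dl' \<and> f dl' < 0) \<or> sgrad f dl' = {} \<or>
               (\<exists>gb \<in> sgrad f dl'. gb \<ge> 0))))))"

definition la_run :: "(real \<Rightarrow> ereal) \<Rightarrow> (nat \<Rightarrow> real) \<Rightarrow> (nat \<Rightarrow> real) \<Rightarrow> nat \<Rightarrow> bool" where
  "la_run f ds gs N \<longleftrightarrow> 1 \<le> N \<and>
     ds 1 \<in> fdom f \<and> gs 1 \<in> sgrad f (ds 1) \<and> f (ds 1) \<le> 0 \<and> gs 1 < 0 \<and>
     (\<forall>i. 1 \<le> i \<and> i < N \<longrightarrow> la_step f (ds i) (gs i) (ds (Suc i)) (gs (Suc i)))"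

end

(*
  Write t = \<delta>* and c = f(t).  Concavity gives c \<le> 0, f < c strictly to the right of t, and
  f y \<le> c whenever f y \<le> 0; from these alone every iterate x satisfies t \<le> x and f x \<le> 0, and
  its supergradient g is negative unless f x = 0.  D(t, x) is bounded below by the tangent gap
  f x + g (t - x) - c = g (t - n) - c, where n is the Newton point, and above by f y + B - c
  whenever g' (t - y) \<le> B for all supergradients g' at y.  If the look-ahead point 2n - x is
  accepted, every supergradient there is at least g/2, which halves the gap of x; if it is
  rejected then 2n - x \<le> t, so the new iterate n lies at most half way from t to x, and
  monotonicity of supergradients halves the gap of the iterate before.  Since the tangent gap
  does not increase along the run, in both cases D(t, x) is below half the gap, hence below
  half the divergence, of the iterate two steps earlier.
*)
theory Submission
  imports Defs
begin

lemma proper_concave_not_PInf: "proper_concave f \<Longrightarrow> f x \<noteq> \<infinity>"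
  unfolding proper_concave_def by blast

lemma mem_fdom_iff: "x \<in> fdom f \<longleftrightarrow> (\<exists>a. f x = ereal a)"
  unfolding fdom_def by (cases "f x") auto

lemma sgradD: "g \<in> sgrad f x \<Longrightarrow> f y \<le> f x + ereal (g * (y - x))"
  unfolding sgrad_def by blast

lemma sgrad_antimono:
  assumes "f x = ereal a" "f y = ereal b" "x < y" "gx \<in> sgrad f x" "gy \<in> sgrad f y"
  shows "gy \<le> gx"
proof -
  have "b \<le> a + gx * (y - x)" "a \<le> b + gy * (x - y)"
    using sgradD[OF assms(4), of y] sgradD[OF assms(5), of x] assms(1,2) by simp_all
  then have "0 \<le> (gx - gy) * (y - x)" by (simp add: algebra_simps)
  then show ?thesis using assms(3) by (simp add: zero_le_mult_iff)
qed

lemma proper_concave_chord: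
  assumes "proper_concave f" "f x = ereal a" "f y = ereal b" "0 \<le> u" "u \<le> 1"
  shows "ereal (u * a + (1 - u) * b) \<le> f (u * x + (1 - u) * y)"
proof -
  have "convex {(x, t::real). ereal t \<le> f x}"
    using assms(1) unfolding proper_concave_def by blast
  then have "u *\<^sub>R (x, a) + (1 - u) *\<^sub>R (y, b) \<in> {(x, t::real). ereal t \<le> f x}"
    using assms(2-5) unfolding convex_def by auto
  then show ?thesis by (simp add: scaleR_prod_def)
qed

lemma chord_in_fdom:
  assumes "proper_concave f" "f x = ereal a" "f y = ereal b" "0 \<le> u" "u \<le> 1"
  shows "f (u * x + (1 - u) * y) = ereal (real_of_ereal (f (u * x + (1 - u) * y)))"
    and "u * a + (1 - u) * b \<le> real_of_ereal (f (u * x + (1 - u) * y))"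
proof -
  have "ereal (u * a + (1 - u) * b) \<le> f (u * x + (1 - u) * y)"
    by (rule proper_concave_chord[OF assms])
  moreover have "f (u * x + (1 - u) * y) \<noteq> \<infinity>" by (rule proper_concave_not_PInf[OF assms(1)])
  ultimately obtain r where "f (u * x + (1 - u) * y) = ereal r" "u * a + (1 - u) * b \<le> r"
    by (cases "f (u * x + (1 - u) * y)") auto
  then show "f (u * x + (1 - u) * y) = ereal (real_of_ereal (f (u * x + (1 - u) * y)))"
    and "u * a + (1 - u) * b \<le> real_of_ereal (f (u * x + (1 - u) * y))" by simp_all
qed

lemma convex_fdom:
  assumes "proper_concave f"
  shows "convex (fdom f)"
proof (rule convexI)
  fix x y u v :: real
  assume "x \<in> fdom f" "y \<in> fdom f" "0 \<le> u" "0 \<le> v" "u + v = 1"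
  moreover have "v = 1 - u" using \<open>u + v = 1\<close> by simp
  ultimately show "u *\<^sub>R x + v *\<^sub>R y \<in> fdom f"
    using chord_in_fdom(1)[OF assms, of x _ y _ u] by (auto simp: mem_fdom_iff)
qed

lemma concave_on_fdom:
  assumes "proper_concave f"
  shows "concave_on (fdom f) (\<lambda>x. real_of_ereal (f x))"
  unfolding concave_on_iff
proof (intro conjI convex_fdom[OF assms] ballI allI impI)
  fix x y u v :: real
  assume "x \<in> fdom f" "y \<in> fdom f" "0 \<le> u" "0 \<le> v" "u + v = 1"
  moreover have "v = 1 - u" using \<open>u + v = 1\<close> by simp
  ultimately show "u * real_of_ereal (f x) + v * real_of_ereal (f y)
      \<le> real_of_ereal (f (u *\<^sub>R x + v *\<^sub>R y))"
    using chord_in_fdom(2)[OF assms, of x _ y _ u] by (auto simp: mem_fdom_iff)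
qed

lemma fdom_between:
  assumes "proper_concave f" "p \<in> fdom f" "q \<in> fdom f" "p \<le> x" "x \<le> q"
  shows "x \<in> fdom f"
proof -
  have "is_interval (fdom f)" by (simp add: is_interval_convex_1 convex_fdom[OF assms(1)])
  then show ?thesis using assms(2-5) unfolding is_interval_1 by blast
qed

lemma continuous_on_interior_fdom:
  assumes "proper_concave f"
  shows "continuous_on (interior (fdom f)) (\<lambda>x. real_of_ereal (f x))"
proof -
  have "convex_on (fdom f) (\<lambda>x. - real_of_ereal (f x))"
    using concave_on_fdom[OF assms] by (simp add: concave_on_def)
  then have "convex_on (interior (fdom f)) (\<lambda>x. - real_of_ereal (f x))"
    by (rule convex_on_subset[OF _ interior_subset convex_interior[OF convex_fdom[OF assms]]])
  then have "continuous_on (interior (fdom f)) (\<lambda>x. - (- real_of_ereal (f x)))"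
    by (intro continuous_on_minus convex_on_continuous) auto
  then show ?thesis by simp
qed

lemma continuous_on_Icc_inside_fdom:
  assumes "proper_concave f" "p \<in> fdom f" "q \<in> fdom f" "p < a" "b < q"
  shows "continuous_on {a..b} (\<lambda>x. real_of_ereal (f x))"
proof -
  have "{p<..<q} \<subseteq> interior (fdom f)"
    using fdom_between[OF assms(1-3)] by (intro interior_maximal) auto
  then have "{a..b} \<subseteq> interior (fdom f)" using assms(4,5) by auto
  then show ?thesis by (rule continuous_on_subset[OF continuous_on_interior_fdom[OF assms(1)]])
qed

lemma concave_on_slope_antimono:
  fixes h :: "real \<Rightarrow> real"
  assumes "concave_on I h" "x \<in> I" "z \<in> I" "x < y" "y < z"
  shows "(h z - h y) / (z - y) \<le> (h y - h x) / (y - x)"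
proof -
  have "convex_on I (\<lambda>x. - h x)" using assms(1) by (simp add: concave_on_def)
  from convex_on_slope_le[OF this assms(2-5)]
  have "(h y - h x) / (x - y) \<le> (h z - h y) / (y - z)" by simp
  moreover have "(h y - h x) / (x - y) = - ((h y - h x) / (y - x))"
    and "(h z - h y) / (y - z) = - ((h z - h y) / (z - y))"
    by (metis minus_diff_eq divide_minus_right)+
  ultimately show ?thesis by simp
qed

lemma sgrad_nonempty:
  assumes pc: "proper_concave f" and "p \<in> fdom f" "q \<in> fdom f" "p < z" "z < q"
  shows "sgrad f z \<noteq> {}"
proof -
  define h where "h x = real_of_ereal (f x)" for x
  have conc: "concave_on (fdom f) h"
    using concave_on_fdom[OF pc] by (simp add: h_def[abs_def])
  have fin: "f x = ereal (h x)" if "x \<in> fdom f" for x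
    using that by (auto simp: mem_fdom_iff h_def)
  have z: "z \<in> fdom f" using fdom_between[OF pc assms(2,3)] assms(4,5) by simp
  \<comment> \<open>The infimum of the left difference quotients at \<open>z\<close> is a supergradient.\<close>
  define S where "S = {(h z - h y) / (z - y) | y. y \<in> fdom f \<and> y < z}"
  have "S \<noteq> {}" using assms(2,4) by (auto simp: S_def)
  have right_slope_le: "(h x - h z) / (x - z) \<le> s" if "s \<in> S" "x \<in> fdom f" "z < x" for s x
    using that concave_on_slope_antimono[OF conc] by (auto simp: S_def)
  then have "bdd_below S" using assms(3,5) by (auto simp: bdd_below_def)
  have "Inf S \<in> sgrad f z"
    unfolding sgrad_def
  proof (intro CollectI allI)
    fix x
    consider "x \<notin> fdom f" | "x \<in> fdom f" "x < z" | "x = z" | "x \<in> fdom f" "z < x"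
      using less_linear[of x z] by blast
    then show "f x \<le> f z + ereal (Inf S * (x - z))"
    proof cases
      case 1
      then have "f x = -\<infinity>"
        using proper_concave_not_PInf[OF pc] by (cases "f x") (auto simp: mem_fdom_iff)
      then show ?thesis by simp
    next
      case 2
      then have "Inf S \<le> (h z - h x) / (z - x)"
        using \<open>bdd_below S\<close> by (intro cInf_lower) (auto simp: S_def)
      then have "h x \<le> h z + Inf S * (x - z)"
        using 2 by (simp add: le_divide_eq algebra_simps)
      then show ?thesis using fin[OF z] fin[OF 2(1)] by simp
    next
      case 4
      then have "(h x - h z) / (x - z) \<le> Inf S"
        using \<open>S \<noteq> {}\<close> right_slope_le by (intro cInf_greatest) auto
      then have "h x \<le> h z + Inf S * (x - z)"
        using 4 by (simp add: divide_le_eq algebra_simps)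
      then show ?thesis using fin[OF z] fin[OF 4(1)] by simp
    qed simp
  qed
  then show ?thesis by blast
qed

lemma concave_root_between:
  assumes pc: "proper_concave f"
    and p: "f p = ereal a" "0 < a" and y: "f y = ereal b" "b \<le> 0"
    and "z \<in> fdom f" "p < y" "y < z"
  shows "\<exists>r>p. f r = 0"
proof -
  define h where "h x = real_of_ereal (f x)" for x
  \<comment> \<open>The chord from \<open>p\<close> to \<open>y\<close> vanishes at \<open>q\<close>; then apply the intermediate value
    theorem on \<open>[q, y]\<close>, which lies in the interior of the domain, where \<open>f\<close> is continuous.\<close>
  define s where "s = a / (a - b)"
  have s: "0 < s" "s \<le> 1" using p(2) y(2) by (auto simp: s_def field_simps)
  define q where "q = (1 - s) * p + (1 - (1 - s)) * y"
  have "(1 - s) * a + (1 - (1 - s)) * b = 0"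
    using p(2) y(2) by (simp add: s_def field_simps)
  then have hq: "0 \<le> h q"
    using chord_in_fdom(2)[OF pc p(1) y(1), of "1 - s"] s by (simp add: q_def h_def)
  have pq: "p < q" and qy: "q \<le> y"
    using s \<open>p < y\<close> mult_strict_left_mono[OF \<open>p < y\<close> \<open>0 < s\<close>] mult_left_mono[of p y "1 - s"]
    by (auto simp: q_def algebra_simps)
  have p_dom: "p \<in> fdom f" using p(1) by (simp add: mem_fdom_iff)
  have "continuous_on {q..y} h"
    unfolding h_def by (rule continuous_on_Icc_inside_fdom[OF pc p_dom \<open>z \<in> fdom f\<close> pq \<open>y < z\<close>])
  moreover have "h y \<le> 0" using y by (simp add: h_def)
  ultimately obtain r where r: "q \<le> r" "r \<le> y" "h r = 0"
    using IVT2'[of h y 0 q] hq qy by auto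
  have "r \<in> fdom f" using fdom_between[OF pc p_dom \<open>z \<in> fdom f\<close>] r pq \<open>y < z\<close> by simp
  then have "f r = 0" using r(3) by (auto simp: mem_fdom_iff h_def zero_ereal_def)
  then show ?thesis using pq r(1) by (intro exI[of _ r]) simp
qed

lemma root_right_of_positive_value:
  assumes pc: "proper_concave f"
    and d0: "f d0 = ereal b0" "b0 \<le> 0" "g0 \<in> sgrad f d0" "g0 < 0"
    and p: "f p = ereal a" "0 < a"
  shows "\<exists>r>p. f r = 0"
proof -
  have "a \<le> b0 + g0 * (p - d0)" using sgradD[OF d0(3), of p] d0(1) p(1) by simp
  then have "p < d0" using d0(2,4) p(2) by (smt (verit) mult_nonpos_nonneg)
  show ?thesis
  proof (cases "b0 = 0")
    case True
    then show ?thesis using \<open>p < d0\<close> d0(1) by (auto simp: zero_ereal_def)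
  next
    case False
    then have "0 < b0 / g0" using d0(2,4) by (simp add: divide_neg_neg)
    define y where "y = max ((p + d0) / 2) (d0 - b0 / g0)"
    have py: "p < y" and yd: "y < d0"
      using \<open>p < d0\<close> \<open>0 < b0 / g0\<close> by (simp_all add: y_def less_max_iff_disj)
    have "g0 * (y - d0) \<le> g0 * (- (b0 / g0))"
      using d0(4) by (intro mult_left_mono_neg) (auto simp: y_def)
    then have "b0 + g0 * (y - d0) \<le> 0" using d0(4) by simp
    then have "f y \<le> 0"
      using sgradD[OF d0(3), of y] d0(1) by (auto simp: zero_ereal_def intro: order_trans)
    moreover have d0_dom: "d0 \<in> fdom f" and "p \<in> fdom f"
      using d0(1) p(1) by (simp_all add: mem_fdom_iff)
    moreover have "y \<in> fdom f"
      using fdom_between[OF pc \<open>p \<in> fdom f\<close> d0_dom] py yd by simp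
    ultimately obtain b where "f y = ereal b" "b \<le> 0"
      by (auto simp: mem_fdom_iff zero_ereal_def)
    then show ?thesis using concave_root_between[OF pc p] d0_dom py yd by blast
  qed
qed

lemma level_set_has_max:
  assumes pc: "proper_concave f"
    and d0: "f d0 = ereal b0" "g0 \<in> sgrad f d0" "g0 < 0" "b0 \<le> v"
    and p: "f p = ereal v"
  shows "\<exists>m. f m = ereal v \<and> (\<forall>y. f y = ereal v \<longrightarrow> y \<le> m)"
proof -
  \<comment> \<open>For \<open>v > b0\<close> the supergradient at \<open>d0\<close> confines the level set to the left of
    \<open>d1 < d0\<close>, where \<open>f\<close> is continuous, so the level set is closed there.\<close>
  define d1 where "d1 = d0 + (v - b0) / g0"
  have le_d1: "y \<le> d1" if "f y = ereal v" for y
  proof -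
    have "v \<le> b0 + g0 * (y - d0)" using sgradD[OF d0(2), of y] that d0(1) by simp
    then have "v - b0 \<le> (y - d0) * g0" by (simp add: algebra_simps)
    then have "y - d0 \<le> (v - b0) / g0" using d0(3) by (simp add: neg_le_divide_eq)
    then show ?thesis unfolding d1_def by linarith
  qed
  consider "v = b0" | "\<forall>y. f y = ereal v \<longrightarrow> y \<le> p" | p' where "b0 < v" "f p' = ereal v" "p < p'"
    using d0(4) by (metis not_le order_le_less)
  then show ?thesis
  proof cases
    case 1
    then show ?thesis using d0(1) le_d1 by (auto simp: d1_def)
  next
    case 2
    then show ?thesis using p by blast
  next
    case 3
    define h where "h x = real_of_ereal (f x)" for x
    define L where "L = {y \<in> {p'..d1}. h y = v}"
    have "d1 < d0" using 3(1) d0(3) by (simp add: d1_def divide_pos_neg)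
    have p_dom: "p \<in> fdom f" and d0_dom: "d0 \<in> fdom f"
      using p d0(1) by (simp_all add: mem_fdom_iff)
    have level_in_L: "y \<in> L" if "f y = ereal v" "p' \<le> y" for y
      using that le_d1 by (simp add: L_def h_def)
    have "closed L"
      unfolding L_def h_def
      using continuous_on_Icc_inside_fdom[OF pc p_dom d0_dom \<open>p < p'\<close> \<open>d1 < d0\<close>]
      by (intro continuous_closed_preimage_constant) auto
    moreover have "p' \<in> L" using level_in_L 3(2) by simp
    moreover have "bdd_above L" by (auto simp: L_def bdd_above_def)
    ultimately have "Sup L \<in> L" and upper: "\<And>y. y \<in> L \<Longrightarrow> y \<le> Sup L" and "p' \<le> Sup L"
      using closed_contains_Sup cSup_upper by blast+
    have "Sup L \<in> fdom f"
      using fdom_between[OF pc p_dom d0_dom] \<open>Sup L \<in> L\<close> \<open>p < p'\<close> \<open>d1 < d0\<close>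
      by (auto simp: L_def)
    then have "f (Sup L) = ereal v"
      using \<open>Sup L \<in> L\<close> by (auto simp: L_def h_def mem_fdom_iff)
    moreover have "y \<le> Sup L" if "f y = ereal v" for y
      using level_in_L[OF that] upper \<open>p' \<le> Sup L\<close> by (cases "p' \<le> y") auto
    ultimately show ?thesis by blast
  qed
qed

lemma bregman_ge:
  assumes "f t = ereal c" "f x = ereal a" "g \<in> sgrad f x"
  shows "ereal (a + g * (t - x) - c) \<le> bregman f t x"
proof (cases "t = x")
  case True
  then show ?thesis using assms(1,2) by (simp add: bregman_def)
next
  case False
  have "ereal (g * (t - x)) \<le> (SUP g\<in>sgrad f x. ereal (g * (t - x)))"
    using assms(3) by (rule SUP_upper)
  then show ?thesis
    using False assms(1,2) by (cases "SUP g\<in>sgrad f x. ereal (g * (t - x))") (auto simp: bregman_def)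
qed

lemma bregman_le:
  assumes "f t = ereal c" "f y = ereal b"
    and "\<And>g. g \<in> sgrad f y \<Longrightarrow> g * (t - y) \<le> B" "0 \<le> B"
  shows "bregman f t y \<le> ereal (b + B - c)"
proof (cases "t = y")
  case True
  then show ?thesis using assms(1,2,4) by (simp add: bregman_def)
next
  case False
  have "(SUP g\<in>sgrad f y. ereal (g * (t - y))) \<le> ereal B"
    using assms(3) by (intro SUP_least) simp
  then show ?thesis
    using False assms(1,2) by (cases "SUP g\<in>sgrad f y. ereal (g * (t - y))") (auto simp: bregman_def)
qed

definition newton_point :: "(real \<Rightarrow> ereal) \<Rightarrow> real \<Rightarrow> real \<Rightarrow> real" where
  "newton_point f x g = x - real_of_ereal (f x) / g"

lemma newton_point_tangent:
  assumes "f x = ereal a" "a < 0" "g < 0"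
  shows "newton_point f x g < x" and "a + g * (y - x) = g * (y - newton_point f x g)"
  using assms by (simp_all add: newton_point_def divide_neg_neg field_simps)

text \<open>\<open>t\<close> and \<open>c\<close> stand for \<open>\<delta>\<^sup>*\<close> and \<open>f(\<delta>\<^sup>*)\<close>; these are the only properties of
  \<open>\<delta>\<^sup>*\<close> the convergence argument uses.\<close>
locale newton_target =
  fixes f :: "real \<Rightarrow> ereal" and t c :: real
  assumes proper: "proper_concave f"
    and value_at_target: "f t = ereal c"
    and target_value_nonpos: "c \<le> 0"
    and less_right_of_target: "t < z \<Longrightarrow> f z < ereal c"
    and nonpos_le_target_value: "f y \<le> 0 \<Longrightarrow> f y \<le> ereal c"
begin

definition admissible :: "real \<Rightarrow> real \<Rightarrow> bool" where
  "admissible x g \<longleftrightarrow>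
     (\<exists>a. f x = ereal a \<and> a \<le> 0 \<and> (a < 0 \<longrightarrow> g < 0)) \<and> g \<in> sgrad f x \<and> t \<le> x"

lemma admissibleD:
  assumes "admissible x g" "f x = ereal a"
  shows "a \<le> 0" "a < 0 \<Longrightarrow> g < 0" "g \<in> sgrad f x" "t \<le> x"
  using assms unfolding admissible_def by auto

lemma admissible_nonzeroE:
  assumes "admissible x g" "f x \<noteq> 0"
  obtains a where "f x = ereal a" "a < 0"
  using assms unfolding admissible_def by (force simp: zero_ereal_def)

lemma sgrad_nonneg_left_of_target:
  assumes "f x = ereal a" "a \<le> c" "g \<in> sgrad f x" "x < t"
  shows "0 \<le> g"
proof -
  have "c \<le> a + g * (t - x)" using sgradD[OF assms(3), of t] value_at_target assms(1) by simp
  then have "0 \<le> g * (t - x)" using assms(2) by simp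
  then show ?thesis using assms(4) by (simp add: zero_le_mult_iff)
qed

lemma sgrad_neg_right_of_target:
  assumes "f x = ereal a" "g \<in> sgrad f x" "t < x"
  shows "g < 0"
proof -
  have "c \<le> a + g * (t - x)" using sgradD[OF assms(2), of t] value_at_target assms(1) by simp
  moreover have "a < c" using less_right_of_target[OF assms(3)] assms(1) by simp
  ultimately have "0 < g * (t - x)" by simp
  then show ?thesis using assms(3) by (simp add: zero_less_mult_iff)
qed

lemma admissibleI_descending:
  assumes "f x = ereal a" "a \<le> 0" "g \<in> sgrad f x" "g < 0"
  shows "admissible x g"
proof -
  have "a \<le> c" using nonpos_le_target_value[of x] assms(1,2) by (simp add: zero_ereal_def)
  then have "t \<le> x" using sgrad_nonneg_left_of_target[OF assms(1) _ assms(3)] assms(4) by force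
  then show ?thesis using assms unfolding admissible_def by blast
qed

lemma newton_point_admissible:
  assumes adm: "admissible x g" and "f x \<noteq> 0"
    and ga: "ga \<in> sgrad f (newton_point f x g)" "f (newton_point f x g) \<noteq> -\<infinity>"
      "\<not> (f (newton_point f x g) < 0 \<and> 0 \<le> ga)"
  shows "admissible (newton_point f x g) ga" and "newton_point f x g < x"
proof -
  define n where "n = newton_point f x g"
  obtain a where a: "f x = ereal a" "a < 0" using admissible_nonzeroE[OF assms(1,2)] .
  note x = admissibleD[OF adm a(1)]
  have "g < 0" using x(2) a(2) .
  note tangent = newton_point_tangent[of f, OF a \<open>g < 0\<close>, folded n_def]
  have "f n \<le> 0" using sgradD[OF x(3), of n] a(1) tangent(2)[of n] by (simp add: zero_ereal_def)
  then obtain w where w: "f n = ereal w" "w \<le> 0"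
    using ga(2) by (cases "f n") (auto simp: n_def zero_ereal_def)
  have "w \<le> c" using nonpos_le_target_value[of n] w by (simp add: zero_ereal_def)
  show "n < x" by (rule tangent(1))
  have "t \<le> n"
  proof (rule ccontr)
    assume "\<not> t \<le> n"
    have "c \<le> a + g * (t - x)" using sgradD[OF x(3), of t] value_at_target a(1) by simp
    also have "\<dots> = g * (t - n)" by (rule tangent(2))
    also have "\<dots> < 0" using \<open>\<not> t \<le> n\<close> \<open>g < 0\<close> by (simp add: mult_neg_pos)
    finally have "f n < 0" using w \<open>w \<le> c\<close> by (simp add: zero_ereal_def)
    then have "ga < 0" using ga(3) by (simp add: n_def)
    moreover have "0 \<le> ga"
      using sgrad_nonneg_left_of_target[OF w(1) \<open>w \<le> c\<close>] ga(1) \<open>\<not> t \<le> n\<close> by (simp add: n_def)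
    ultimately show False by simp
  qed
  then show "admissible n ga"
    using w ga(1,3) unfolding admissible_def n_def by (auto simp: zero_ereal_def)
qed

lemma lookahead_acceptable:
  assumes "x \<in> fdom f" "t < l" "l < x"
  shows "-\<infinity> < f l \<and> f l < 0" and "sgrad f l \<noteq> {}" and "\<forall>gb\<in>sgrad f l. gb < 0"
proof -
  have t_dom: "t \<in> fdom f" using value_at_target by (simp add: mem_fdom_iff)
  have "l \<in> fdom f" using fdom_between[OF proper t_dom assms(1)] assms(2,3) by simp
  then obtain w where w: "f l = ereal w" by (auto simp: mem_fdom_iff)
  show "-\<infinity> < f l \<and> f l < 0"
    using less_right_of_target[OF assms(2)] target_value_nonpos w by (simp add: zero_ereal_def)
  show "sgrad f l \<noteq> {}" by (rule sgrad_nonempty[OF proper t_dom assms(1-3)])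
  show "\<forall>gb\<in>sgrad f l. gb < 0" using sgrad_neg_right_of_target[OF w _ assms(2)] by blast
qed

lemma la_step_admissible:
  assumes adm: "admissible x g" and step: "la_step f x g x' g'"
  defines "n \<equiv> newton_point f x g"
  shows "admissible x' g'" and "n < x" and "x' = 2 * n - x \<or> (x' = n \<and> 2 * n - x \<le> t)"
proof -
  have "f x \<noteq> 0" using step unfolding la_step_def by blast
  obtain ga where ga: "ga \<in> sgrad f n" "f n \<noteq> -\<infinity>" "\<not> (f n < 0 \<and> 0 \<le> ga)"
    and accept_or_reject:
      "(-\<infinity> < f (2 * n - x) \<and> f (2 * n - x) < 0 \<and> g' \<in> sgrad f (2 * n - x) \<and> g' < 0
         \<and> x' = 2 * n - x)
       \<or> (x' = n \<and> g' = ga \<and> (\<not> (-\<infinity> < f (2 * n - x) \<and> f (2 * n - x) < 0)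
           \<or> sgrad f (2 * n - x) = {} \<or> (\<exists>gb \<in> sgrad f (2 * n - x). 0 \<le> gb)))"
    using step unfolding la_step_def n_def newton_point_def Let_def by blast
  note newton = newton_point_admissible[OF adm \<open>f x \<noteq> 0\<close> ga[unfolded n_def], folded n_def]
  show "n < x" by (rule newton(2))
  have "admissible x' g' \<and> (x' = 2 * n - x \<or> (x' = n \<and> 2 * n - x \<le> t))"
    using accept_or_reject
  proof
    assume "-\<infinity> < f (2 * n - x) \<and> f (2 * n - x) < 0 \<and> g' \<in> sgrad f (2 * n - x) \<and> g' < 0
      \<and> x' = 2 * n - x"
    then show ?thesis
      by (cases "f x'") (auto simp: zero_ereal_def intro: admissibleI_descending)
  next
    assume rejected: "x' = n \<and> g' = ga \<and> (\<not> (-\<infinity> < f (2 * n - x) \<and> f (2 * n - x) < 0)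
      \<or> sgrad f (2 * n - x) = {} \<or> (\<exists>gb \<in> sgrad f (2 * n - x). 0 \<le> gb))"
    have "x \<in> fdom f" using adm by (auto simp: admissible_def mem_fdom_iff)
    then have "2 * n - x \<le> t"
      using lookahead_acceptable[of x "2 * n - x"] rejected newton(2) by force
    then show ?thesis using rejected newton(1) by simp
  qed
  then show "admissible x' g'" and "x' = 2 * n - x \<or> (x' = n \<and> 2 * n - x \<le> t)" by auto
qed

lemma la_run_admissible:
  assumes run: "la_run f ds gs N" and "1 \<le> i" "i \<le> N"
  shows "admissible (ds i) (gs i)"
  using assms(2,3)
proof (induction i rule: nat_induct_at_least)
  case base
  have "ds 1 \<in> fdom f" "gs 1 \<in> sgrad f (ds 1)" "f (ds 1) \<le> 0" "gs 1 < 0"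
    using run unfolding la_run_def by auto
  then show ?case by (auto simp: mem_fdom_iff zero_ereal_def intro: admissibleI_descending)
next
  case (Suc i)
  then have "la_step f (ds i) (gs i) (ds (Suc i)) (gs (Suc i))"
    using run unfolding la_run_def by simp
  with Suc show ?case using la_step_admissible(1) by simp
qed

lemma tangent_gap_antimono:
  assumes adm0: "admissible x0 g0" "f x0 = ereal a0" "a0 < 0"
    and adm1: "admissible x1 g1" "f x1 = ereal a1"
    and "x1 \<le> newton_point f x0 g0"
  shows "a1 + g1 * (t - x1) \<le> a0 + g0 * (t - x0)"
proof -
  define n0 where "n0 = newton_point f x0 g0"
  note x0 = admissibleD[OF adm0(1,2)] and x1 = admissibleD[OF adm1]
  have "g0 < 0" using x0(2) adm0(3) .
  note tangent = newton_point_tangent[of f, OF adm0(2,3) \<open>g0 < 0\<close>, folded n0_def]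
  have "g0 \<le> g1"
    using sgrad_antimono[OF adm1(2) adm0(2) _ x1(3) x0(3)] assms(6) tangent(1) by (simp add: n0_def)
  have "a1 + g1 * (t - x1) \<le> g1 * (t - x1)" using x1(1) by simp
  also have "\<dots> \<le> g0 * (t - x1)"
    using mult_right_mono_neg[OF \<open>g0 \<le> g1\<close>, of "t - x1"] x1(4) by simp
  also have "\<dots> \<le> g0 * (t - n0)"
    using mult_left_mono_neg[of "t - n0" "t - x1" g0] \<open>g0 < 0\<close> assms(6) by (simp add: n0_def)
  finally show ?thesis using tangent(2)[of t] by simp
qed

lemma bregman_after_lookahead:
  assumes adm1: "admissible x1 g1" "f x1 = ereal a1" "a1 < 0"
    and adm2: "admissible x2 g2"
    and x2: "x2 = 2 * newton_point f x1 g1 - x1"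
  shows "bregman f t x2 < ereal ((a1 + g1 * (t - x1) - c) / 2)"
proof -
  define n1 where "n1 = newton_point f x1 g1"
  have "g1 < 0" using admissibleD(2)[OF adm1(1,2)] adm1(3) .
  note tangent = newton_point_tangent[of f, OF adm1(2,3) \<open>g1 < 0\<close>, folded n1_def]
  have a1: "a1 = g1 * (x1 - n1)" using tangent(2)[of x1] by simp
  have "n1 < x1" by (rule tangent(1))
  obtain a2 where a2: "f x2 = ereal a2" using adm2 unfolding admissible_def by blast
  note x2_props = admissibleD[OF adm2 a2]
  have "a2 \<le> c" using nonpos_le_target_value[of x2] a2 x2_props(1) by (simp add: zero_ereal_def)
  have half_slope: "g * (t - x2) \<le> g1 * (t - x2) / 2" if "g \<in> sgrad f x2" for g
  proof -
    have "a1 \<le> a2 + g * (x1 - x2)" using sgradD[OF that, of x1] a2 adm1(2) by simp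
    then have "g1 * (x1 - n1) \<le> (2 * g) * (x1 - n1)"
      using a1 x2 x2_props(1) by (simp add: n1_def[symmetric] algebra_simps)
    then have "g1 \<le> 2 * g" using \<open>n1 < x1\<close> by simp
    then have "(g - g1 / 2) * (t - x2) \<le> 0" using x2_props(4) by (intro mult_nonneg_nonpos) auto
    moreover have "(g - g1 / 2) * (t - x2) = g * (t - x2) - g1 * (t - x2) / 2"
      by (simp add: algebra_simps)
    ultimately show ?thesis by linarith
  qed
  have "0 \<le> g1 * (t - x2) / 2" using \<open>g1 < 0\<close> x2_props(4) by (simp add: mult_nonpos_nonpos)
  then have "bregman f t x2 \<le> ereal (a2 + g1 * (t - x2) / 2 - c)"
    by (intro bregman_le[OF value_at_target a2] half_slope)
  also have "\<dots> < ereal ((a1 + g1 * (t - x1) - c) / 2)"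
  proof -
    have x2_n1: "x2 = 2 * n1 - x1" using x2 by (simp add: n1_def)
    have "g1 * (t - x2) = g1 * (t - x1) + 2 * a1" unfolding x2_n1 a1 by (simp add: algebra_simps)
    then have "a2 + g1 * (t - x2) / 2 - c < (a1 + g1 * (t - x1) - c) / 2"
      using adm1(3) \<open>a2 \<le> c\<close> target_value_nonpos by (simp add: field_simps)
    then show ?thesis by simp
  qed
  finally show ?thesis .
qed

lemma bregman_after_newton_step:
  assumes adm0: "admissible x0 g0" "f x0 = ereal a0" "a0 < 0"
    and x1: "f x1 < 0" "t \<le> x1" "x1 \<le> newton_point f x0 g0"
    and adm2: "admissible x2 g2" and "2 * x2 - x1 \<le> t"
  shows "bregman f t x2 < ereal ((a0 + g0 * (t - x0) - c) / 2)"
proof -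
  define n0 where "n0 = newton_point f x0 g0"
  note x0 = admissibleD[OF adm0(1,2)]
  have "g0 < 0" using x0(2) adm0(3) .
  note tangent = newton_point_tangent[of f, OF adm0(2,3) \<open>g0 < 0\<close>, folded n0_def]
  have gap0: "a0 + g0 * (t - x0) = g0 * (t - n0)" by (rule tangent(2))
  have "n0 < x0" by (rule tangent(1))
  obtain a2 where a2: "f x2 = ereal a2" using adm2 unfolding admissible_def by blast
  have "t \<le> x2" using admissibleD(4)[OF adm2 a2] .
  show ?thesis
  proof (cases "x2 = t")
    case True
    have "0 < g0 * (t - n0) - c"
    proof (cases "x1 = t")
      case True
      then have "c < 0" using x1(1) value_at_target by (simp add: zero_ereal_def)
      moreover have "0 \<le> g0 * (t - n0)"
        using \<open>g0 < 0\<close> x1(2,3) by (intro mult_nonpos_nonpos) (auto simp: n0_def)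
      ultimately show ?thesis by simp
    next
      case False
      then have "0 < g0 * (t - n0)"
        using \<open>g0 < 0\<close> x1(2,3) by (intro mult_neg_neg) (auto simp: n0_def)
      then show ?thesis using target_value_nonpos by simp
    qed
    then show ?thesis using True gap0 by (simp add: bregman_def)
  next
    case False
    then have "t < x2" using \<open>t \<le> x2\<close> by simp
    then have "a2 < c" using less_right_of_target a2 by fastforce
    have "x2 < x0" using \<open>t < x2\<close> assms(8) x1(3) \<open>n0 < x0\<close> by (simp add: n0_def)
    have slope_bound: "g * (t - x2) \<le> g0 * (t - x2)" if "g \<in> sgrad f x2" for g
    proof -
      have "g0 \<le> g" using sgrad_antimono[OF a2 adm0(2) \<open>x2 < x0\<close> that x0(3)] .
      then show ?thesis using mult_right_mono_neg[of g0 g "t - x2"] \<open>t < x2\<close> by simp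
    qed
    have "0 \<le> g0 * (t - x2)" using \<open>g0 < 0\<close> \<open>t < x2\<close> by (simp add: mult_nonpos_nonpos)
    then have "bregman f t x2 \<le> ereal (a2 + g0 * (t - x2) - c)"
      by (intro bregman_le[OF value_at_target a2] slope_bound)
    also have "\<dots> < ereal ((g0 * (t - n0) - c) / 2)"
    proof -
      have "g0 * (2 * (t - x2)) \<le> g0 * (t - n0)"
        using \<open>g0 < 0\<close> assms(8) x1(3) by (intro mult_left_mono_neg) (auto simp: n0_def)
      then have "2 * (g0 * (t - x2)) \<le> g0 * (t - n0)" by (simp add: mult.left_commute)
      then show ?thesis using \<open>a2 < c\<close> target_value_nonpos by simp
    qed
    finally show ?thesis using gap0 by simp
  qed
qed

lemma bregman_two_step_contraction:
  assumes adm0: "admissible x0 g0"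
    and step0: "la_step f x0 g0 x1 g1" and step1: "la_step f x1 g1 x2 g2"
  shows "bregman f t x2 < ereal (1/2) * bregman f t x0"
proof -
  note first = la_step_admissible[OF adm0 step0] and second = la_step_admissible[OF first(1) step1]
  have "x1 \<le> newton_point f x0 g0" using first(2,3) by auto
  have "f x0 \<noteq> 0" "f x1 \<noteq> 0" using step0 step1 unfolding la_step_def by blast+
  obtain a0 where a0: "f x0 = ereal a0" "a0 < 0"
    using admissible_nonzeroE[OF adm0 \<open>f x0 \<noteq> 0\<close>] .
  obtain a1 where a1: "f x1 = ereal a1" "a1 < 0"
    using admissible_nonzeroE[OF first(1) \<open>f x1 \<noteq> 0\<close>] .
  have "bregman f t x2 < ereal ((a0 + g0 * (t - x0) - c) / 2)"
    using second(3)
  proof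
    assume "x2 = 2 * newton_point f x1 g1 - x1"
    then have "bregman f t x2 < ereal ((a1 + g1 * (t - x1) - c) / 2)"
      using bregman_after_lookahead[OF first(1) a1 second(1)] by blast
    also have "\<dots> \<le> ereal ((a0 + g0 * (t - x0) - c) / 2)"
      using tangent_gap_antimono[OF adm0 a0 first(1) a1(1) \<open>x1 \<le> newton_point f x0 g0\<close>] by simp
    finally show ?thesis .
  next
    assume "x2 = newton_point f x1 g1 \<and> 2 * newton_point f x1 g1 - x1 \<le> t"
    moreover have "f x1 < 0" "t \<le> x1" using a1 admissibleD(4)[OF first(1) a1(1)] by simp_all
    ultimately show ?thesis
      using bregman_after_newton_step[OF adm0 a0 _ _ \<open>x1 \<le> newton_point f x0 g0\<close> second(1)]
      by simp
  qed
  also have "\<dots> \<le> ereal (1/2) * bregman f t x0"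
  proof -
    have "ereal (a0 + g0 * (t - x0) - c) \<le> bregman f t x0"
      using bregman_ge[OF value_at_target a0(1) admissibleD(3)[OF adm0 a0(1)]] .
    then have "ereal (1/2) * ereal (a0 + g0 * (t - x0) - c) \<le> ereal (1/2) * bregman f t x0"
      by (rule ereal_mult_left_mono) simp
    then show ?thesis by simp
  qed
  finally show ?thesis .
qed

end

lemma delta_star_greatest:
  assumes pc: "proper_concave f"
    and d0: "f d0 = ereal b0" "b0 \<le> 0" "g0 \<in> sgrad f d0" "g0 < 0"
    and root_or_max: "(\<exists>x. f x = 0) \<or> argmax_set f \<noteq> {}"
  defines "S \<equiv> {d. f d = 0} \<union> argmax_set f"
  shows "delta_star f \<in> S" and "\<And>x. x \<in> S \<Longrightarrow> x \<le> delta_star f"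
proof -
  have max_root: "\<exists>m. f m = 0 \<and> (\<forall>y. f y = 0 \<longrightarrow> y \<le> m)" if "f r = 0" for r
    using level_set_has_max[OF pc d0(1,3,4) d0(2), of r] that by (simp add: zero_ereal_def)
  have max_argmax: "\<exists>m\<in>argmax_set f. \<forall>y\<in>argmax_set f. y \<le> m" if "a \<in> argmax_set f" for a
  proof -
    have "f d0 \<le> f a" using that by (simp add: argmax_set_def)
    then obtain M where M: "f a = ereal M" "b0 \<le> M"
      using d0(1) proper_concave_not_PInf[OF pc, of a] by (cases "f a") auto
    have "argmax_set f = {y. f y = ereal M}"
    proof (intro set_eqI iffI)
      fix y
      assume "y \<in> argmax_set f"
      then have "f y = f a" using that by (simp add: argmax_set_def order.antisym)
      then show "y \<in> {y. f y = ereal M}" using M(1) by simp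
    next
      fix y
      assume "y \<in> {y. f y = ereal M}"
      then show "y \<in> argmax_set f" using that M(1) by (simp add: argmax_set_def)
    qed
    then show ?thesis using level_set_has_max[OF pc d0(1,3,4) M(2) M(1)] by auto
  qed
  have "\<exists>m\<in>S. \<forall>x\<in>S. x \<le> m"
  proof (cases "argmax_set f = {}")
    case True
    then obtain r where "f r = 0" using root_or_max by blast
    then show ?thesis using max_root True by (auto simp: S_def)
  next
    case False
    then obtain mA where mA: "mA \<in> argmax_set f" "\<forall>y\<in>argmax_set f. y \<le> mA"
      using max_argmax by blast
    show ?thesis
    proof (cases "\<exists>r. f r = 0")
      case True
      then obtain mR where "f mR = 0" "\<forall>y. f y = 0 \<longrightarrow> y \<le> mR" using max_root by blast
      then show ?thesis using mA by (intro bexI[of _ "max mR mA"]) (auto simp: S_def max_def)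
    next
      case False
      then show ?thesis using mA by (auto simp: S_def)
    qed
  qed
  then obtain m where m: "m \<in> S" "\<forall>x\<in>S. x \<le> m" by blast
  then have "delta_star f = m"
    unfolding delta_star_def S_def by (intro Greatest_equality) auto
  then show "delta_star f \<in> S" and "\<And>x. x \<in> S \<Longrightarrow> x \<le> delta_star f" using m by auto
qed

lemma newton_target_delta_star:
  assumes pc: "proper_concave f"
    and "\<exists>d \<in> fdom f. f d \<le> 0 \<and> (\<exists>g \<in> sgrad f d. g < 0)"
    and root_or_max: "(\<exists>x. f x = 0) \<or> argmax_set f \<noteq> {}"
  shows "\<exists>c. newton_target f (delta_star f) c"
proof -
  obtain d0 b0 g0 where d0: "f d0 = ereal b0" "b0 \<le> 0" "g0 \<in> sgrad f d0" "g0 < 0"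
    using assms(2) by (auto simp: mem_fdom_iff zero_ereal_def)
  define t where "t = delta_star f"
  note greatest = delta_star_greatest[OF pc d0 root_or_max, folded t_def]
  have not_pos: "\<not> 0 < f z" if "t \<le> z" for z
  proof
    assume "0 < f z"
    then obtain a where "f z = ereal a" "0 < a"
      using proper_concave_not_PInf[OF pc, of z] by (cases "f z") auto
    then obtain r where "z < r" "f r = 0" using root_right_of_positive_value[OF pc d0] by blast
    then show False using greatest(2)[of r] that by simp
  qed
  consider "f t = 0" | "t \<in> argmax_set f" "f t \<noteq> 0" using greatest(1) by blast
  then obtain c where "f t = ereal c" "c \<le> 0" "\<And>z. t < z \<Longrightarrow> f z < ereal c"
      "\<And>y. f y \<le> 0 \<Longrightarrow> f y \<le> ereal c"
  proof cases
    case 1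
    have "f z < 0" if "t < z" for z
      using greatest(2)[of z] not_pos[of z] that by (cases "f z = 0") auto
    then show thesis using that[of 0] 1 by (simp add: zero_ereal_def)
  next
    case 2
    have "f d0 \<le> f t" using 2(1) by (simp add: argmax_set_def)
    then obtain c where c: "f t = ereal c"
      using d0(1) proper_concave_not_PInf[OF pc, of t] by (cases "f t") auto
    have "f z < f t" if "t < z" for z
    proof -
      have "f z \<noteq> f t"
        using greatest(2)[of z] 2(1) that by (auto simp: argmax_set_def)
      then show ?thesis using 2(1) by (simp add: argmax_set_def order_le_neq_trans)
    qed
    moreover have "c \<le> 0" using not_pos[of t] c by (simp add: zero_ereal_def)
    ultimately show thesis using that[of c] c 2(1) by (simp add: argmax_set_def)
  qed
  then show ?thesis using pc unfolding newton_target_def t_def by blast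
qed

theorem lemma3p4:
  fixes f :: "real \<Rightarrow> ereal" and ds gs :: "nat \<Rightarrow> real" and N :: nat
  assumes "proper_concave f"
    and "\<exists>d \<in> fdom f. f d \<le> 0 \<and> (\<exists>g \<in> sgrad f d. g < 0)"
    and "(\<exists>x. f x = 0) \<or> argmax_set f \<noteq> {}"
    and "la_run f ds gs N"
  shows "\<forall>i. 3 \<le> i \<and> i \<le> N \<longrightarrow>
           bregman f (delta_star f) (ds i) < ereal (1/2) * bregman f (delta_star f) (ds (i - 2))"
proof (intro allI impI)
  fix i assume i: "3 \<le> i \<and> i \<le> N"
  define k where "k = i - 2"
  have k: "i = Suc (Suc k)" "1 \<le> k" using i unfolding k_def by arith+
  obtain c where "newton_target f (delta_star f) c"
    using newton_target_delta_star[OF assms(1-3)] by blast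
  then interpret newton_target f "delta_star f" c .
  have "admissible (ds k) (gs k)" using la_run_admissible[OF assms(4)] i k by simp
  moreover have "la_step f (ds k) (gs k) (ds (Suc k)) (gs (Suc k))"
    and "la_step f (ds (Suc k)) (gs (Suc k)) (ds i) (gs i)"
    using assms(4) i k unfolding la_run_def by simp_all
  ultimately show "bregman f (delta_star f) (ds i) < ereal (1/2) * bregman f (delta_star f) (ds (i - 2))"
    using bregman_two_step_contraction k(1) by simp
qed

end
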